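(* Let $0\le\pi_1\le\pi_2\le1$ and, for $k=1,2$, let $X^k_1,X^k_2,\dots$ be independent Bernoulli$(\pi_k)$ random variables, and $S^k_t=\sum_{j=1}^tX^k_j$. Let $(l_t)_{t\in\mathbb{N}}$ and $(u_t)_{t\in\mathbb{N}}$ be arbitrary integer sequences and, for $k=1,2$, let $\tau_k=\infty$ if $l_t<S^k_t<u_t$ for all $t\in\mathbb{N}$, and $\tau_k=\min\{j: S^k_j\le l_j\text{ or }S^k_j\ge u_j\}$ otherwise. If $t\in\mathbb{N}$ is such that $\mathbb{P}[\tau_k>t]>0$ for $k=1,2$, then the conditional law of $S^1_t$ given $\tau_1>t$ is stochastically smaller than the conditional law of $S^2_t$ given $\tau_2>t$, i.e. $\mathbb{P}(S^1_t\le x\mid\tau_1>t)\ge\mathbb{P}(S^2_t\le x\mid\tau_2>t)$ for all $x\in\mathbb{R}$.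
   Context: $\mathbb{N}=\{1,2,\dots\}$. *)

theory Defs
  imports "HOL-Probability.Probability"
begin

definition partial_sum :: "(nat \<Rightarrow> 'a \<Rightarrow> bool) \<Rightarrow> nat \<Rightarrow> 'a \<Rightarrow> int" where
  "partial_sum X t \<omega> = (\<Sum>j=1..t. of_bool (X j \<omega>))"

definition exit_time :: "(nat \<Rightarrow> int) \<Rightarrow> (nat \<Rightarrow> int) \<Rightarrow> (nat \<Rightarrow> 'a \<Rightarrow> int) \<Rightarrow> 'a \<Rightarrow> enat" where
  "exit_time l u S \<omega> =
     (if \<forall>t\<ge>1. l t < S t \<omega> \<and> S t \<omega> < u t then \<infinity>
      else enat (LEAST j. j \<ge> 1 \<and> (S j \<omega> \<le> l j \<or> S j \<omega> \<ge> u j)))"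

end

theory Submission
  imports Defs
begin

text \<open>Up to time t everything is a function of the path w = (X_1, ..., X_t), so both
  conditional laws are ratios of finite sums over the surviving paths, a path with k
  successes having weight p^k (1-p)^(t-k). Survival is a property of the path alone, and
  the ratio of the weights for \<pi>2 and \<pi>1 is increasing in k = S_t; this monotone
  likelihood ratio is inherited by the conditional laws and implies the stochastic order.\<close>

definition paths :: "nat \<Rightarrow> (nat \<Rightarrow> bool) set" where
  "paths t = {1..t} \<rightarrow>\<^sub>E UNIV"

definition sample_path :: "(nat \<Rightarrow> 'a \<Rightarrow> bool) \<Rightarrow> nat \<Rightarrow> 'a \<Rightarrow> nat \<Rightarrow> bool" where
  "sample_path X t \<omega> = restrict (\<lambda>j. X j \<omega>) {1..t}"

definition path_weight :: "real \<Rightarrow> nat \<Rightarrow> (nat \<Rightarrow> bool) \<Rightarrow> real" where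
  "path_weight p t w = (\<Prod>j\<in>{1..t}. if w j then p else 1 - p)"

definition path_sum :: "(nat \<Rightarrow> bool) \<Rightarrow> nat \<Rightarrow> int" where
  "path_sum w s = (\<Sum>j=1..s. of_bool (w j))"

definition surviving_paths :: "(nat \<Rightarrow> int) \<Rightarrow> (nat \<Rightarrow> int) \<Rightarrow> nat \<Rightarrow> (nat \<Rightarrow> bool) set" where
  "surviving_paths l u t = {w \<in> paths t. \<forall>s\<in>{1..t}. l s < path_sum w s \<and> path_sum w s < u s}"

lemma finite_paths: "finite (paths t)"
  unfolding paths_def by (intro finite_PiE) auto

lemma sample_path_in_paths: "sample_path X t \<omega> \<in> paths t"
  by (simp add: sample_path_def paths_def)

lemma partial_sum_eq_path_sum: "s \<le> t \<Longrightarrow> partial_sum X s \<omega> = path_sum (sample_path X t \<omega>) s"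
  unfolding partial_sum_def path_sum_def sample_path_def by (intro sum.cong) auto

lemma exit_time_gt_iff:
  "exit_time l u S \<omega> > enat t \<longleftrightarrow> (\<forall>s\<in>{1..t}. l s < S s \<omega> \<and> S s \<omega> < u s)"
proof (cases "\<forall>s\<ge>1. l s < S s \<omega> \<and> S s \<omega> < u s")
  case True
  then show ?thesis by (auto simp: exit_time_def)
next
  case False
  let ?exit = "\<lambda>j. j \<ge> 1 \<and> (S j \<omega> \<le> l j \<or> S j \<omega> \<ge> u j)"
  define L where "L = Least ?exit"
  from False have "\<exists>j. ?exit j" by force
  then have L: "?exit L" unfolding L_def by (rule LeastI_ex)
  have before_L: "\<not> ?exit i" if "i < L" for i
    using that not_less_Least unfolding L_def by blast
  have "exit_time l u S \<omega> = enat L"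
    using False by (simp add: exit_time_def L_def)
  moreover have "t < L \<longleftrightarrow> (\<forall>s\<in>{1..t}. l s < S s \<omega> \<and> S s \<omega> < u s)"
    using L before_L by (meson atLeastAtMost_iff le_less_trans not_le)
  ultimately show ?thesis by simp
qed

lemma exit_time_partial_sum_gt_iff:
  "exit_time l u (partial_sum X) \<omega> > enat t \<longleftrightarrow> sample_path X t \<omega> \<in> surviving_paths l u t"
  by (auto simp: exit_time_gt_iff surviving_paths_def sample_path_in_paths
      partial_sum_eq_path_sum[symmetric])

lemma path_sum_eq_card: "path_sum w t = int (card {j\<in>{1..t}. w j})"
  unfolding path_sum_def by (simp add: Int_def)

lemma path_weight_eq_power:
  "path_weight p t w = p ^ card {j\<in>{1..t}. w j} * (1 - p) ^ (t - card {j\<in>{1..t}. w j})"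
proof -
  let ?H = "{j\<in>{1..t}. w j}"
  have "{1..t} \<inter> {j. w j} = ?H" and "{1..t} \<inter> - {j. w j} = {1..t} - ?H"
    by auto
  then have "path_weight p t w = (\<Prod>j\<in>?H. p) * (\<Prod>j\<in>{1..t} - ?H. 1 - p)"
    using prod.If_cases[of "{1..t}" w "\<lambda>_. p" "\<lambda>_. 1 - p"] by (simp add: path_weight_def)
  moreover have "card ({1..t} - ?H) = t - card ?H"
    by (subst card_Diff_subset) auto
  ultimately show ?thesis by simp
qed

lemma bernoulli_likelihood_ratio_mono:
  fixes p q :: real
  assumes "0 \<le> p" "p \<le> q" "q \<le> 1" "k \<le> k'" "k' \<le> t"
  shows "q^k * (1-q)^(t-k) * (p^k' * (1-p)^(t-k')) \<le> p^k * (1-p)^(t-k) * (q^k' * (1-q)^(t-k'))"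
proof -
  obtain d m where k': "k' = k + d" and t: "t = k' + m"
    using assms(4,5) le_Suc_ex by blast
  define C where "C = p^k * q^k * (1-p)^m * (1-q)^m"
  have "q^k * (1-q)^(t-k) * (p^k' * (1-p)^(t-k')) = C * (p * (1-q))^d"
    unfolding C_def k' t by (simp add: power_add power_mult_distrib mult_ac)
  also have "\<dots> \<le> C * (q * (1-p))^d"
  proof (intro mult_left_mono power_mono)
    show "p * (1 - q) \<le> q * (1 - p)" using assms by (simp add: algebra_simps)
  qed (use assms in \<open>auto simp: C_def\<close>)
  also have "\<dots> = p^k * (1-p)^(t-k) * (q^k' * (1-q)^(t-k'))"
    unfolding C_def k' t by (simp add: power_add power_mult_distrib mult_ac)
  finally show ?thesis .
qed

lemma path_weight_likelihood_ratio_mono: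
  assumes "0 \<le> p" "p \<le> q" "q \<le> 1" "path_sum w t \<le> path_sum w' t"
  shows "path_weight q t w * path_weight p t w' \<le> path_weight p t w * path_weight q t w'"
proof -
  have "card {j\<in>{1..t}. w' j} \<le> card {1..t}"
    by (rule card_mono) auto
  with assms show ?thesis
    unfolding path_weight_eq_power
    by (intro bernoulli_likelihood_ratio_mono) (auto simp: path_sum_eq_card)
qed

lemma restricted_sum_ratio_le:
  fixes f g :: "'a \<Rightarrow> real"
  assumes "finite S" "0 < sum f S" "0 < sum g S"
    and cross: "\<And>w w'. w \<in> S \<Longrightarrow> w' \<in> S \<Longrightarrow> P w \<Longrightarrow> \<not> P w' \<Longrightarrow> g w * f w' \<le> f w * g w'"
  shows "sum g {w\<in>S. P w} / sum g S \<le> sum f {w\<in>S. P w} / sum f S"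
proof -
  let ?A = "{w\<in>S. P w}" and ?B = "{w\<in>S. \<not> P w}"
  have split: "sum h S = sum h ?A + sum h ?B" for h :: "'a \<Rightarrow> real"
    using \<open>finite S\<close> by (subst sum.union_disjoint[symmetric]) (auto intro: sum.cong)
  have "sum g ?A * sum f ?B = (\<Sum>w\<in>?A. \<Sum>w'\<in>?B. g w * f w')" by (rule sum_product)
  also have "\<dots> \<le> (\<Sum>w\<in>?A. \<Sum>w'\<in>?B. f w * g w')" by (intro sum_mono cross) auto
  also have "\<dots> = sum f ?A * sum g ?B" by (rule sum_product[symmetric])
  finally have "sum g ?A * sum f ?B \<le> sum f ?A * sum g ?B" .
  then show ?thesis
    using assms(2,3) by (simp add: divide_simps split[of f] split[of g] algebra_simps)
qed

lemma sample_path_event_eq: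
  "{\<omega>\<in>space M. sample_path X t \<omega> = w} = {\<omega>\<in>space M. w \<in> paths t \<and> (\<forall>j\<in>{1..t}. X j \<omega> = w j)}"
  by (auto simp: sample_path_def paths_def PiE_def extensional_def fun_eq_iff)

lemma sample_path_event_measurable:
  assumes "\<And>j. j \<in> {1..t} \<Longrightarrow> X j \<in> measurable M (count_space UNIV)"
  shows "{\<omega>\<in>space M. sample_path X t \<omega> = w} \<in> sets M"
  unfolding sample_path_event_eq using assms by measurable

locale bernoulli_trials = prob_space +
  fixes X :: "nat \<Rightarrow> 'a \<Rightarrow> bool" and p :: real and t :: nat
  assumes indep: "indep_vars (\<lambda>_. count_space UNIV) X {1..t}"
    and distr_X: "\<And>j. j \<in> {1..t} \<Longrightarrow> distr M (count_space UNIV) (X j) = measure_pmf (bernoulli_pmf p)"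
    and p_nonneg: "0 \<le> p" and p_le_1: "p \<le> 1"
begin

lemma measurable_X: "j \<in> {1..t} \<Longrightarrow> X j \<in> measurable M (count_space UNIV)"
  using indep by (auto simp: indep_vars_def)

lemma prob_X_eq: "j \<in> {1..t} \<Longrightarrow> prob (X j -` {b} \<inter> space M) = (if b then p else 1 - p)"
proof -
  assume j: "j \<in> {1..t}"
  have "prob (X j -` {b} \<inter> space M) = measure (distr M (count_space UNIV) (X j)) {b}"
    using measurable_X[OF j] by (simp add: measure_distr)
  also have "\<dots> = (if b then p else 1 - p)"
    using distr_X[OF j] p_nonneg p_le_1 by (simp add: measure_pmf_single)
  finally show ?thesis .
qed

lemma prob_sample_path_eq:
  assumes "w \<in> paths t"
  shows "\<P>(\<omega> in M. sample_path X t \<omega> = w) = path_weight p t w"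
proof (cases "t = 0")
  case True
  then show ?thesis using assms by (simp add: sample_path_event_eq path_weight_def prob_space)
next
  case False
  have event: "{\<omega>\<in>space M. sample_path X t \<omega> = w} = (\<Inter>j\<in>{1..t}. X j -` {w j} \<inter> space M)"
    using False assms by (auto simp: sample_path_event_eq)
  have "\<P>(\<omega> in M. sample_path X t \<omega> = w) = (\<Prod>j\<in>{1..t}. prob (X j -` {w j} \<inter> space M))"
    unfolding event by (rule indep_varsD[OF indep]) (use False in auto)
  also have "\<dots> = path_weight p t w"
    by (simp add: prob_X_eq path_weight_def)
  finally show ?thesis .
qed

lemma prob_sample_path_in:
  assumes "W \<subseteq> paths t"
  shows "\<P>(\<omega> in M. sample_path X t \<omega> \<in> W) = (\<Sum>w\<in>W. path_weight p t w)"
proof -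
  have events: "{\<omega>\<in>space M. sample_path X t \<omega> = w} \<in> events" for w
    using measurable_X by (rule sample_path_event_measurable)
  have "\<P>(\<omega> in M. sample_path X t \<omega> \<in> W) = prob (\<Union>w\<in>W. {\<omega>\<in>space M. sample_path X t \<omega> = w})"
    by (rule arg_cong[where f=prob]) auto
  also have "\<dots> = (\<Sum>w\<in>W. \<P>(\<omega> in M. sample_path X t \<omega> = w))"
    by (rule finite_measure_finite_Union)
      (auto simp: disjoint_family_on_def intro: finite_subset[OF assms finite_paths] events)
  also have "\<dots> = (\<Sum>w\<in>W. path_weight p t w)"
    using assms by (intro sum.cong) (auto intro: prob_sample_path_eq)
  finally show ?thesis .
qed

lemma prob_exit_time_gt:
  "\<P>(\<omega> in M. exit_time l u (partial_sum X) \<omega> > enat t) = (\<Sum>w\<in>surviving_paths l u t. path_weight p t w)"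
  using prob_sample_path_in[of "surviving_paths l u t"]
  by (simp add: exit_time_partial_sum_gt_iff surviving_paths_def)

lemma cond_prob_partial_sum_le_exit_time_gt:
  "\<P>(\<omega> in M. real_of_int (partial_sum X t \<omega>) \<le> x \<bar> exit_time l u (partial_sum X) \<omega> > enat t)
    = (\<Sum>w\<in>{w\<in>surviving_paths l u t. real_of_int (path_sum w t) \<le> x}. path_weight p t w)
      / (\<Sum>w\<in>surviving_paths l u t. path_weight p t w)"
proof -
  have "\<P>(\<omega> in M. real_of_int (partial_sum X t \<omega>) \<le> x \<and> exit_time l u (partial_sum X) \<omega> > enat t)
    = \<P>(\<omega> in M. sample_path X t \<omega> \<in> {w\<in>surviving_paths l u t. real_of_int (path_sum w t) \<le> x})"
    by (rule arg_cong[where f=prob])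
      (auto simp: exit_time_partial_sum_gt_iff partial_sum_eq_path_sum[OF order_refl])
  also have "\<dots> = (\<Sum>w\<in>{w\<in>surviving_paths l u t. real_of_int (path_sum w t) \<le> x}. path_weight p t w)"
    by (rule prob_sample_path_in) (auto simp: surviving_paths_def)
  finally show ?thesis
    by (simp add: cond_prob_def prob_exit_time_gt)
qed

end

theorem lemma4:
  fixes M1 :: "'a measure" and M2 :: "'b measure"
    and X1 :: "nat \<Rightarrow> 'a \<Rightarrow> bool" and X2 :: "nat \<Rightarrow> 'b \<Rightarrow> bool"
    and \<pi>1 \<pi>2 :: real and l u :: "nat \<Rightarrow> int" and t :: nat
  assumes "0 \<le> \<pi>1" "\<pi>1 \<le> \<pi>2" "\<pi>2 \<le> 1"
    and "prob_space M1" "prob_space M2"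
    and "prob_space.indep_vars M1 (\<lambda>_. count_space UNIV) X1 {1..}"
    and "prob_space.indep_vars M2 (\<lambda>_. count_space UNIV) X2 {1..}"
    and "\<And>j. j \<ge> 1 \<Longrightarrow> distr M1 (count_space UNIV) (X1 j) = measure_pmf (bernoulli_pmf \<pi>1)"
    and "\<And>j. j \<ge> 1 \<Longrightarrow> distr M2 (count_space UNIV) (X2 j) = measure_pmf (bernoulli_pmf \<pi>2)"
    and "t \<ge> 1"
    and "\<P>(\<omega> in M1. exit_time l u (partial_sum X1) \<omega> > enat t) > 0"
    and "\<P>(\<omega> in M2. exit_time l u (partial_sum X2) \<omega> > enat t) > 0"
  shows "\<forall>x::real.
           \<P>(\<omega> in M1. real_of_int (partial_sum X1 t \<omega>) \<le> x \<bar> exit_time l u (partial_sum X1) \<omega> > enat t)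
         \<ge> \<P>(\<omega> in M2. real_of_int (partial_sum X2 t \<omega>) \<le> x \<bar> exit_time l u (partial_sum X2) \<omega> > enat t)"
proof
  fix x :: real
  interpret A: bernoulli_trials M1 X1 \<pi>1 t
  proof (intro bernoulli_trials.intro bernoulli_trials_axioms.intro assms(4))
    show "prob_space.indep_vars M1 (\<lambda>_. count_space UNIV) X1 {1..t}"
      by (rule prob_space.indep_vars_subset[OF assms(4,6)]) auto
  qed (use assms(1-3,8) in auto)
  interpret B: bernoulli_trials M2 X2 \<pi>2 t
  proof (intro bernoulli_trials.intro bernoulli_trials_axioms.intro assms(5))
    show "prob_space.indep_vars M2 (\<lambda>_. count_space UNIV) X2 {1..t}"
      by (rule prob_space.indep_vars_subset[OF assms(5,7)]) auto
  qed (use assms(1-3,9) in auto)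
  show "\<P>(\<omega> in M1. real_of_int (partial_sum X1 t \<omega>) \<le> x \<bar> exit_time l u (partial_sum X1) \<omega> > enat t)
      \<ge> \<P>(\<omega> in M2. real_of_int (partial_sum X2 t \<omega>) \<le> x \<bar> exit_time l u (partial_sum X2) \<omega> > enat t)"
    unfolding A.cond_prob_partial_sum_le_exit_time_gt B.cond_prob_partial_sum_le_exit_time_gt
  proof (rule restricted_sum_ratio_le)
    show "path_weight \<pi>2 t w * path_weight \<pi>1 t w' \<le> path_weight \<pi>1 t w * path_weight \<pi>2 t w'"
      if "real_of_int (path_sum w t) \<le> x" "\<not> real_of_int (path_sum w' t) \<le> x" for w w'
      using that by (intro path_weight_likelihood_ratio_mono assms(1-3)) linarith
    show "finite (surviving_paths l u t)"
      by (simp add: surviving_paths_def finite_paths)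
    show "0 < (\<Sum>w\<in>surviving_paths l u t. path_weight \<pi>1 t w)"
      using assms(11) by (simp add: A.prob_exit_time_gt)
    show "0 < (\<Sum>w\<in>surviving_paths l u t. path_weight \<pi>2 t w)"
      using assms(12) by (simp add: B.prob_exit_time_gt)
  qed
qed

end
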